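(* Let $T_{ij,k\ell}\ge0$ satisfy $\sum_{i,j\ge0}T_{ij,k\ell}=1$ for all $k,\ell\in\mathbb N_0$, and let $\mathcal R(p)_i=\sum_{j,k,\ell\ge0}T_{ij,k\ell}\,p_kp_\ell$ on $\mathcal M_1^+$. Assume $\mathcal R$ has a nonempty, convex, weak-$*$ closed invariant set $M\subset\mathcal M_1^+$ (i.e. $\mathcal R(M)\subset M$) which is tight, i.e. for every $\varepsilon>0$ there is $m\in\mathbb N_0$ with $\sum_{k\ge m}p_k<\varepsilon$ for all $p\in M$. Then $\mathcal R$ has a fixed point in $M$.
   Context: $\mathcal M_1^+$ is the set of probability measures on $\mathbb N_0$, identified with nonnegative sequences summing to $1$. The weak-$*$ topology on $\mathcal M_1^+$ is that of pointwise (vague) convergence $p^{(n)}_k\to p_k$ for every $k$. *)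

theory Defs
  imports "HOL-Analysis.Analysis"
begin

text \<open>Probability measures on the nonnegative integers, as nonnegative
sequences summing to 1. The weak-* topology is the pointwise (product)
topology on nat => real, restricted to this set.\<close>
definition M1plus :: "(nat \<Rightarrow> real) set" where
  "M1plus = {p. (\<forall>k. 0 \<le> p k) \<and> (p has_sum 1) UNIV}"

definition Rop :: "(nat \<Rightarrow> nat \<Rightarrow> nat \<Rightarrow> nat \<Rightarrow> real) \<Rightarrow> (nat \<Rightarrow> real) \<Rightarrow> nat \<Rightarrow> real" where
  "Rop T p i = (\<Sum>\<^sub>\<infinity>(j,k,l)\<in>UNIV. T i j k l * p k * p l)"

end

theory Submission
  imports Defs "HOL-Homology.Brouwer_Degree"
begin

text \<open>Each coordinate of R is, uniformly on the tight set M, the limit of the polynomials obtained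
  by truncating the defining sum to k, l < m, since the neglected mass is at most twice the tail of p
  beyond m. So R is continuous on M for the product (weak-*) topology, and tightness together with
  weak-* closedness makes M compact. The fixed point then comes from the Schauder-Tychonoff theorem
  for compact convex sets in a countable power of the reals: Brouwer's theorem applied to a Schauder
  projection onto a finite net gives approximate fixed points on any finite set of coordinates, and
  compactness turns these into an exact fixed point. Brouwer's theorem itself follows from the
  non-contractibility of spheres.\<close>

section \<open>Brouwer's fixed point theorem for discs and simplices\<close>

lemma continuous_on_coordinate [continuous_intros]:
  "continuous_on A (\<lambda>x::'a \<Rightarrow> 'b::topological_space. x i)"
  by (rule continuous_on_subset[OF continuous_on_product_coordinates]) auto

lemma continuous_on_snd_coordinate [continuous_intros]:
  "continuous_on A (\<lambda>z::'c::topological_space \<times> ('a \<Rightarrow> 'b::topological_space). snd z i)"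
  using continuous_on_compose[OF continuous_on_snd[OF continuous_on_id] continuous_on_coordinate, of A i]
  by (simp add: o_def)

lemma homotopic_with_canonI:
  assumes "continuous_on ({0..1::real} \<times> S) h" "h \<in> {0..1} \<times> S \<rightarrow> T"
    and "\<And>x. x \<in> S \<Longrightarrow> h (0, x) = f x" "\<And>x. x \<in> S \<Longrightarrow> h (1, x) = g x"
  shows "homotopic_with_canon (\<lambda>_. True) S T f g"
proof -
  have "homotopic_with_canon (\<lambda>_. True) S T (\<lambda>x. h (0, x)) (\<lambda>x. h (1, x))"
    unfolding homotopic_with_def using assms(1,2) by (intro exI[of _ h]) (auto simp: image_subset_iff_funcset)
  then show ?thesis
    by (rule homotopic_with_eq) (use assms in auto)
qed

text \<open>Discs and spheres live in nat \<Rightarrow> real, like nsphere of HOL-Homology, rather than in a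
  euclidean_space type: the dimension needed below depends on the size of a net and is not fixed.\<close>

definition sqnorm :: "nat \<Rightarrow> (nat \<Rightarrow> real) \<Rightarrow> real" where
  "sqnorm n x = (\<Sum>i\<le>n. (x i)\<^sup>2)"

definition ndisc :: "nat \<Rightarrow> (nat \<Rightarrow> real) set" where
  "ndisc n = {x. sqnorm n x \<le> 1 \<and> (\<forall>i>n. x i = 0)}"

definition nsphere_set :: "nat \<Rightarrow> (nat \<Rightarrow> real) set" where
  "nsphere_set n = {x. sqnorm n x = 1 \<and> (\<forall>i>n. x i = 0)}"

definition unit_vector :: "nat \<Rightarrow> (nat \<Rightarrow> real) \<Rightarrow> nat \<Rightarrow> real" where
  "unit_vector n x = (\<lambda>i. x i / sqrt (sqnorm n x))"

lemma sqnorm_nonneg: "0 \<le> sqnorm n x"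
  by (simp add: sqnorm_def sum_nonneg)

lemma sqnorm_eq_0D: "sqnorm n x = 0 \<Longrightarrow> i \<le> n \<Longrightarrow> x i = 0"
  by (simp add: sqnorm_def sum_nonneg_eq_0_iff)

lemma sqnorm_scale: "sqnorm n (\<lambda>i. c * x i) = c\<^sup>2 * sqnorm n x"
  by (simp add: sqnorm_def power_mult_distrib sum_distrib_left)

lemma nsphere_set_subset_ndisc: "nsphere_set n \<subseteq> ndisc n"
  by (auto simp: nsphere_set_def ndisc_def)

lemma not_contractible_nsphere_set: "\<not> contractible (nsphere_set n)"
proof -
  have "nsphere n = top_of_set (nsphere_set n)"
    by (simp add: nsphere euclidean_product_topology nsphere_set_def sqnorm_def)
  then show ?thesis
    using non_contractible_space_nsphere[of n] by simp
qed

lemma unit_vector_in_nsphere_set: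
  assumes "sqnorm n x \<noteq> 0" "\<forall>i>n. x i = 0"
  shows "unit_vector n x \<in> nsphere_set n"
proof -
  have "sqnorm n (unit_vector n x) = sqnorm n x / (sqrt (sqnorm n x))\<^sup>2"
    by (simp add: sqnorm_def unit_vector_def power_divide sum_divide_distrib)
  then show ?thesis
    using assms sqnorm_nonneg[of n x] by (simp add: nsphere_set_def unit_vector_def)
qed

lemma continuous_on_unit_vector:
  fixes x :: "'a::topological_space \<Rightarrow> nat \<Rightarrow> real"
  assumes "\<And>i. continuous_on A (\<lambda>z. x z i)" "\<And>z. z \<in> A \<Longrightarrow> sqnorm n (x z) \<noteq> 0"
  shows "continuous_on A (\<lambda>z. unit_vector n (x z))"
  unfolding unit_vector_def sqnorm_def
  by (intro continuous_on_coordinatewise_then_product continuous_intros assms)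
     (use assms(2) in \<open>auto simp: sqnorm_def\<close>)

lemma ndisc_contractible_to_zero:
  "homotopic_with_canon (\<lambda>_. True) (ndisc n) (ndisc n) id (\<lambda>_ _. 0)"
proof (rule homotopic_with_canonI[where h = "\<lambda>(t, x) i. (1 - t) * x i"])
  show "continuous_on ({0..1} \<times> ndisc n) (\<lambda>(t, x) i. (1 - t) * x i)"
    unfolding case_prod_unfold by (intro continuous_on_coordinatewise_then_product continuous_intros)
  have "(1 - t)\<^sup>2 * sqnorm n x \<le> 1" if "t \<in> {0..1}" "x \<in> ndisc n" for t :: real and x
    using that by (intro mult_le_one) (auto simp: ndisc_def power_le_one sqnorm_nonneg)
  then show "(\<lambda>(t, x) i. (1 - t) * x i) \<in> {0..1} \<times> ndisc n \<rightarrow> ndisc n"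
    by (auto simp: ndisc_def sqnorm_scale)
qed (auto simp: ndisc_def)

lemma sqnorm_diff_scaled_eq_0D:
  assumes "x \<in> nsphere_set n" "y \<in> ndisc n" "t \<in> {0..1}" "sqnorm n (\<lambda>i. x i - t * y i) = 0"
  shows "x = y"
proof -
  have eq: "x i = t * y i" if "i \<le> n" for i
    using sqnorm_eq_0D[OF assms(4) that] by simp
  have "1 = sqnorm n (\<lambda>i. t * y i)"
    using assms(1) eq by (simp add: nsphere_set_def sqnorm_def)
  also have "\<dots> \<le> t\<^sup>2"
    using assms(2) by (auto simp: sqnorm_scale ndisc_def intro: mult_left_le)
  also have "\<dots> \<le> t"
    using assms(3) by (simp add: power2_eq_square mult_left_le_one_le)
  finally have "t = 1"
    using assms(3) by simp
  show "x = y"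
  proof
    fix i show "x i = y i"
      using eq \<open>t = 1\<close> assms(1,2) by (cases "i \<le> n") (auto simp: nsphere_set_def ndisc_def)
  qed
qed

lemma homotopic_id_unit_vector_diff:
  assumes contf: "continuous_on (nsphere_set n) f" and f: "f \<in> nsphere_set n \<rightarrow> ndisc n"
    and nofix: "\<And>x. x \<in> nsphere_set n \<Longrightarrow> f x \<noteq> x"
  shows "homotopic_with_canon (\<lambda>_. True) (nsphere_set n) (nsphere_set n)
    id (\<lambda>x. unit_vector n (\<lambda>i. x i - f x i))"
proof (rule homotopic_with_canonI[where h = "\<lambda>(t, x). unit_vector n (\<lambda>i. x i - t * f x i)"])
  let ?S = "nsphere_set n"
  have nz: "sqnorm n (\<lambda>i. x i - t * f x i) \<noteq> 0" if "x \<in> ?S" "t \<in> {0..1}" for x t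
  proof
    assume "sqnorm n (\<lambda>i. x i - t * f x i) = 0"
    moreover have "f x \<in> ndisc n"
      using f that(1) by blast
    ultimately show False
      using sqnorm_diff_scaled_eq_0D[OF that(1) _ that(2)] nofix[OF that(1)] by metis
  qed
  have "continuous_on ({0..1} \<times> ?S) (\<lambda>z. f (snd z) i)" for i
    using continuous_on_product_then_coordinatewise[OF contf]
    by (rule continuous_on_compose2[OF _ continuous_on_snd[OF continuous_on_id]]) auto
  then show "continuous_on ({0..1} \<times> ?S) (\<lambda>(t, x). unit_vector n (\<lambda>i. x i - t * f x i))"
    unfolding case_prod_unfold
    by (intro continuous_on_unit_vector continuous_intros) (use nz in force)+
  show "(\<lambda>(t, x). unit_vector n (\<lambda>i. x i - t * f x i)) \<in> {0..1} \<times> ?S \<rightarrow> ?S"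
  proof clarify
    fix t :: real and x assume t: "t \<in> {0..1}" and x: "x \<in> ?S"
    then have "f x \<in> ndisc n"
      using f by blast
    then show "unit_vector n (\<lambda>i. x i - t * f x i) \<in> ?S"
      using nz[OF x t] x by (intro unit_vector_in_nsphere_set) (auto simp: nsphere_set_def ndisc_def)
  qed
qed (auto simp: unit_vector_def nsphere_set_def)

text \<open>If f had no fixed point, x \<mapsto> (x - f x) / |x - f x| would be a map from the disc to
  the sphere homotopic to the identity on the sphere, which would make the sphere contractible.\<close>

lemma brouwer_ndisc:
  assumes contf: "continuous_on (ndisc n) f" and f: "f \<in> ndisc n \<rightarrow> ndisc n"
  shows "\<exists>x\<in>ndisc n. f x = x"
proof (rule ccontr)
  assume nofix: "\<not> ?thesis"
  let ?S = "nsphere_set n"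
  define G where "G y = unit_vector n (\<lambda>i. y i - f y i)" for y
  have SD: "?S \<subseteq> ndisc n"
    by (rule nsphere_set_subset_ndisc)
  have nz: "sqnorm n (\<lambda>i. y i - f y i) \<noteq> 0" if "y \<in> ndisc n" for y
  proof
    assume zero: "sqnorm n (\<lambda>i. y i - f y i) = 0"
    have "f y \<in> ndisc n"
      using f that by blast
    then have "f y i = y i" for i
      using sqnorm_eq_0D[OF zero, of i] that by (cases "i \<le> n") (auto simp: ndisc_def)
    then show False
      using nofix that by auto
  qed
  have "continuous_on (ndisc n) G"
    unfolding G_def using continuous_on_product_then_coordinatewise[OF contf]
    by (intro continuous_on_unit_vector continuous_intros nz)
  moreover have "G \<in> ndisc n \<rightarrow> ?S"
  proof
    fix y assume "y \<in> ndisc n"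
    then show "G y \<in> ?S"
      using nz f unfolding G_def by (intro unit_vector_in_nsphere_set) (auto simp: ndisc_def)
  qed
  ultimately have "homotopic_with_canon (\<lambda>_. True) (ndisc n) ?S (G \<circ> id) (G \<circ> (\<lambda>_ _. 0))"
    by (rule homotopic_with_compose_continuous_left[OF ndisc_contractible_to_zero])
  then have "homotopic_with_canon (\<lambda>_. True) ?S ?S G (\<lambda>_. G (\<lambda>_. 0))"
    by (simp add: o_def homotopic_with_subset_left[OF _ SD])
  moreover have "homotopic_with_canon (\<lambda>_. True) ?S ?S id G"
    unfolding G_def using SD nofix
    by (intro homotopic_id_unit_vector_diff continuous_on_subset[OF contf]) (use f in auto)
  ultimately have "contractible ?S"
    unfolding contractible_def by (metis homotopic_with_trans)
  then show False
    using not_contractible_nsphere_set by blast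
qed

definition nsimplex :: "nat \<Rightarrow> (nat \<Rightarrow> real) set" where
  "nsimplex n = {w. (\<forall>i. 0 \<le> w i) \<and> (\<forall>i\<ge>n. w i = 0) \<and> (\<Sum>i<n. w i) \<le> 1}"

lemma nsimplex_subset_ndisc: "nsimplex n \<subseteq> ndisc n"
proof
  fix w assume w: "w \<in> nsimplex n"
  have "w i \<le> 1" if "i < n" for i
    using w that order.trans[OF member_le_sum[of i "{..<n}" w]] by (auto simp: nsimplex_def)
  then have sq_le: "(w i)\<^sup>2 \<le> w i" if "i < n" for i
    using w that by (auto simp: nsimplex_def power2_eq_square mult_left_le_one_le)
  have "sqnorm n w = (\<Sum>i<n. (w i)\<^sup>2)"
    using w by (simp add: sqnorm_def lessThan_Suc_atMost[symmetric] nsimplex_def)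
  also have "\<dots> \<le> (\<Sum>i<n. w i)"
    by (rule sum_mono) (simp add: sq_le)
  finally have "sqnorm n w \<le> (\<Sum>i<n. w i)" .
  then show "w \<in> ndisc n"
    using w by (auto simp: nsimplex_def ndisc_def)
qed

lemma nsimplex_retract_of_ndisc: "nsimplex n retract_of ndisc n"
proof -
  define s where "s x = max 1 (\<Sum>j<n. max (x j) 0)" for x :: "nat \<Rightarrow> real"
  define r where "r x = (\<lambda>i. if i < n then max (x i) 0 / s x else 0)" for x
  have s_pos: "0 < s x" for x
    by (simp add: s_def less_max_iff_disj)
  have r_simplex: "r x \<in> nsimplex n" for x
  proof -
    have "(\<Sum>i<n. r x i) = (\<Sum>j<n. max (x j) 0) / s x"
      by (simp add: r_def sum_divide_distrib)
    also have "\<dots> \<le> 1"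
      using s_pos[of x] by (simp add: s_def divide_le_eq_1)
    finally show ?thesis
      using s_pos[of x] by (simp add: nsimplex_def r_def)
  qed
  have r_id: "r w = w" if "w \<in> nsimplex n" for w
  proof -
    have "s w = 1"
      using that by (simp add: s_def nsimplex_def max_absorb1)
    then show ?thesis
      using that by (auto simp: r_def nsimplex_def max_absorb1 fun_eq_iff)
  qed
  have "continuous_on (ndisc n) r"
    unfolding r_def s_def
  proof (rule continuous_on_coordinatewise_then_product)
    fix i show "continuous_on (ndisc n) (\<lambda>x. if i < n then max (x i) 0 / max 1 (\<Sum>j<n. max (x j) 0) else 0)"
      by (cases "i < n") (auto intro!: continuous_intros simp: less_max_iff_disj)
  qed
  then have "retraction (ndisc n) (nsimplex n) r"
    using nsimplex_subset_ndisc r_simplex r_id unfolding retraction by (metis image_subset_iff subset_antisym image_eqI subsetI)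
  then show ?thesis
    unfolding retract_of_def by blast
qed

lemma brouwer_nsimplex:
  assumes "continuous_on (nsimplex n) g" "g \<in> nsimplex n \<rightarrow> nsimplex n"
  obtains w where "w \<in> nsimplex n" "g w = w"
  using retract_fixpoint_property[OF nsimplex_retract_of_ndisc brouwer_ndisc assms] by blast

section \<open>The Schauder-Tychonoff theorem in powers of the reals\<close>

text \<open>These seminorms generate the product topology.\<close>

definition coord_dist :: "'a set \<Rightarrow> ('a \<Rightarrow> real) \<Rightarrow> ('a \<Rightarrow> real) \<Rightarrow> real" where
  "coord_dist F p q = (\<Sum>k\<in>F. \<bar>p k - q k\<bar>)"

lemma continuous_on_coord_dist [continuous_intros]:
  assumes "continuous_on A f" "continuous_on A g"
  shows "continuous_on A (\<lambda>x. coord_dist F (f x) (g x))"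
proof -
  have "continuous_on A (\<lambda>x. f x k)" "continuous_on A (\<lambda>x. g x k)" for k
    using assms by (auto intro: continuous_on_product_then_coordinatewise)
  then show ?thesis
    unfolding coord_dist_def by (intro continuous_intros)
qed

lemma coord_dist_self [simp]: "coord_dist F p p = 0"
  by (simp add: coord_dist_def)

lemma coord_dist_nonneg: "0 \<le> coord_dist F p q"
  by (simp add: coord_dist_def sum_nonneg)

text \<open>Convexity in the vector space 'a \<Rightarrow> real, which has no real_vector instance.\<close>

definition fun_convex :: "('a \<Rightarrow> real) set \<Rightarrow> bool" where
  "fun_convex M \<longleftrightarrow> (\<forall>p\<in>M. \<forall>q\<in>M. \<forall>t. 0 \<le> t \<and> t \<le> 1 \<longrightarrow> (\<lambda>k. t * p k + (1 - t) * q k) \<in> M)"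

lemma fun_convexD:
  "fun_convex M \<Longrightarrow> p \<in> M \<Longrightarrow> q \<in> M \<Longrightarrow> 0 \<le> t \<Longrightarrow> t \<le> 1 \<Longrightarrow> (\<lambda>k. t * p k + (1 - t) * q k) \<in> M"
  by (simp add: fun_convex_def)

lemma convex_combination_mem:
  fixes n :: nat
  assumes "fun_convex M"
  shows "(\<And>i. i < n \<Longrightarrow> x i \<in> M) \<Longrightarrow> (\<And>i. i < n \<Longrightarrow> 0 \<le> w i) \<Longrightarrow> (\<Sum>i<n. w i) = 1 \<Longrightarrow>
    (\<lambda>k. \<Sum>i<n. w i * x i k) \<in> M"
proof (induction n arbitrary: w)
  case 0
  then show ?case by simp
next
  case (Suc n)
  show ?case
  proof (cases "w n = 1")
    case True
    then have "(\<Sum>i<n. w i) = 0"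
      using Suc.prems(3) by simp
    then have "w i = 0" if "i < n" for i
      using Suc.prems(2) that by (subst (asm) sum_nonneg_eq_0_iff) auto
    then have "(\<lambda>k. \<Sum>i<Suc n. w i * x i k) = x n"
      using True by simp
    then show ?thesis
      using Suc.prems(1) by simp
  next
    case False
    have "w n \<le> 1"
      using Suc.prems(2,3) member_le_sum[of n "{..<Suc n}" w] by simp
    with False have wn: "0 < 1 - w n"
      by simp
    define v where "v i = w i / (1 - w n)" for i
    have "(\<Sum>i<n. v i) = (\<Sum>i<n. w i) / (1 - w n)"
      by (simp add: v_def sum_divide_distrib)
    also have "\<dots> = 1"
      using Suc.prems(3) wn by simp
    finally have "(\<lambda>k. \<Sum>i<n. v i * x i k) \<in> M"
      using Suc.prems(1,2) wn by (intro Suc.IH) (auto simp: v_def)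
    then have "(\<lambda>k. w n * x n k + (1 - w n) * (\<Sum>i<n. v i * x i k)) \<in> M"
      using Suc.prems(1,2) \<open>w n \<le> 1\<close> by (intro fun_convexD[OF assms]) auto
    moreover have "(1 - w n) * (\<Sum>i<n. v i * x i k) = (\<Sum>i<n. w i * x i k)" for k
      using wn by (simp add: v_def sum_distrib_left)
    ultimately show ?thesis
      by (simp add: add.commute)
  qed
qed

lemma coord_dist_convex_combination_le:
  fixes n :: nat
  assumes "\<And>i. i < n \<Longrightarrow> 0 \<le> w i" "(\<Sum>i<n. w i) = 1"
    and "\<And>i. i < n \<Longrightarrow> w i \<noteq> 0 \<Longrightarrow> coord_dist F p (x i) \<le> e"
  shows "coord_dist F p (\<lambda>k. \<Sum>i<n. w i * x i k) \<le> e"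
proof -
  have "\<bar>p k - (\<Sum>i<n. w i * x i k)\<bar> \<le> (\<Sum>i<n. w i * \<bar>p k - x i k\<bar>)" for k
  proof -
    have "\<bar>p k - (\<Sum>i<n. w i * x i k)\<bar> = \<bar>\<Sum>i<n. w i * (p k - x i k)\<bar>"
      using assms(2) by (simp add: right_diff_distrib sum_subtractf flip: sum_distrib_right)
    also have "\<dots> \<le> (\<Sum>i<n. \<bar>w i * (p k - x i k)\<bar>)"
      by (rule sum_abs)
    also have "\<dots> = (\<Sum>i<n. w i * \<bar>p k - x i k\<bar>)"
      using assms(1) by (simp add: abs_mult)
    finally show ?thesis .
  qed
  then have "coord_dist F p (\<lambda>k. \<Sum>i<n. w i * x i k) \<le> (\<Sum>i<n. w i * coord_dist F p (x i))"
    unfolding coord_dist_def by (simp add: sum_mono sum_distrib_left sum.swap[of _ F])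
  also have "\<dots> \<le> (\<Sum>i<n. w i * e)"
    using assms(1,3) by (intro sum_mono) (fastforce intro: mult_left_mono)
  also have "\<dots> = e"
    using assms(2) by (simp flip: sum_distrib_right)
  finally show ?thesis .
qed

lemma compact_coord_dist_net:
  fixes M :: "('a \<Rightarrow> real) set"
  assumes "compact M" "M \<noteq> {}" "e > 0"
  obtains n :: nat and x where "0 < n" "\<And>i. i < n \<Longrightarrow> x i \<in> M" "\<And>q. q \<in> M \<Longrightarrow> \<exists>i<n. coord_dist F q (x i) < e"
proof -
  have "open {q. coord_dist F q p < e}" for p
    by (intro open_Collect_less continuous_intros)
  moreover have "M \<subseteq> (\<Union>p\<in>M. {q. coord_dist F q p < e})"
    using assms(3) by auto
  ultimately obtain X where X: "X \<subseteq> M" "finite X" "M \<subseteq> (\<Union>p\<in>X. {q. coord_dist F q p < e})"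
    using compactE_image[OF assms(1)] by metis
  obtain xs where xs: "set xs = X"
    using finite_list[OF X(2)] by blast
  show thesis
  proof (rule that[of "length xs" "\<lambda>i. xs ! i"])
    show "0 < length xs"
      using xs X(3) assms(2) by auto
    show "xs ! i \<in> M" if "i < length xs" for i
      using that xs X(1) by auto
    show "\<exists>i<length xs. coord_dist F q (xs ! i) < e" if q: "q \<in> M" for q
    proof -
      obtain p where "p \<in> set xs" "coord_dist F q p < e"
        using q xs X(3) by blast
      then show ?thesis
        by (metis in_set_conv_nth)
    qed
  qed
qed

text \<open>The deficit 1 - (\<Sum>i<n. w i) goes to x 0, so every point of nsimplex n gives a convex
  combination.\<close>

definition simplex_comb :: "nat \<Rightarrow> (nat \<Rightarrow> 'a \<Rightarrow> real) \<Rightarrow> (nat \<Rightarrow> real) \<Rightarrow> 'a \<Rightarrow> real" where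
  "simplex_comb n x w = (\<lambda>k. (\<Sum>i<n. w i * x i k) + (1 - (\<Sum>i<n. w i)) * x 0 k)"

lemma simplex_comb_mem:
  assumes convex: "fun_convex M"
    and "0 < n" "\<And>i. i < n \<Longrightarrow> x i \<in> M" "w \<in> nsimplex n"
  shows "simplex_comb n x w \<in> M"
proof -
  define v where "v i = w i + (if i = 0 then 1 - (\<Sum>j<n. w j) else 0)" for i
  have "(\<lambda>k. \<Sum>i<n. v i * x i k) \<in> M"
  proof (rule convex_combination_mem[OF convex])
    show "0 \<le> v i" for i
      using assms(4) by (simp add: v_def nsimplex_def)
    show "(\<Sum>i<n. v i) = 1"
      using assms(2) by (simp add: v_def sum.distrib)
  qed (use assms(3) in auto)
  moreover have "(\<Sum>i<n. v i * x i k) = simplex_comb n x w k" for k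
    using assms(2) by (simp add: v_def simplex_comb_def distrib_right sum.distrib if_distrib[of "\<lambda>a. a * _"] cong: if_cong)
  ultimately show ?thesis
    by (simp add: fun_eq_iff)
qed

lemma continuous_on_simplex_comb: "continuous_on A (simplex_comb n x)"
  unfolding simplex_comb_def by (intro continuous_on_coordinatewise_then_product continuous_intros)

text \<open>A partition of unity on the points within distance e of the net x 0, ..., x (n - 1),
  subordinate to the e-balls around the net points.\<close>

definition net_weights :: "'a set \<Rightarrow> real \<Rightarrow> nat \<Rightarrow> (nat \<Rightarrow> 'a \<Rightarrow> real) \<Rightarrow> ('a \<Rightarrow> real) \<Rightarrow> nat \<Rightarrow> real"
  where "net_weights F e n x q i =
    (if i < n then max 0 (e - coord_dist F q (x i)) / (\<Sum>j<n. max 0 (e - coord_dist F q (x j))) else 0)"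

lemma net_weights_denominator_pos:
  fixes n :: nat
  assumes "\<exists>i<n. coord_dist F q (x i) < e"
  shows "0 < (\<Sum>j<n. max 0 (e - coord_dist F q (x j)))"
proof -
  obtain i where "i < n" "coord_dist F q (x i) < e"
    using assms by blast
  then show ?thesis
    by (intro sum_pos2[of _ i]) auto
qed

lemma net_weights_in_nsimplex:
  assumes "\<exists>i<n. coord_dist F q (x i) < e"
  shows "net_weights F e n x q \<in> nsimplex n" "(\<Sum>i<n. net_weights F e n x q i) = 1"
  using net_weights_denominator_pos[OF assms]
  by (simp_all add: nsimplex_def net_weights_def sum_divide_distrib[symmetric])

lemma net_weights_nonzeroD: "net_weights F e n x q i \<noteq> 0 \<Longrightarrow> coord_dist F q (x i) < e"
  by (auto simp: net_weights_def split: if_splits)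

lemma continuous_on_net_weights:
  assumes "continuous_on A h" "\<And>z. z \<in> A \<Longrightarrow> \<exists>i<n. coord_dist F (h z) (x i) < e"
  shows "continuous_on A (\<lambda>z. net_weights F e n x (h z))"
proof (rule continuous_on_coordinatewise_then_product)
  fix i
  have "continuous_on A (\<lambda>z. max 0 (e - coord_dist F (h z) (x j)))" for j
    by (intro continuous_on_max continuous_on_const continuous_on_diff
        continuous_on_coord_dist[OF assms(1) continuous_on_const])
  moreover have "(\<Sum>j<n. max 0 (e - coord_dist F (h z) (x j))) \<noteq> 0" if "z \<in> A" for z
    using net_weights_denominator_pos[OF assms(2)[OF that]] by simp
  ultimately show "continuous_on A (\<lambda>z. net_weights F e n x (h z) i)"
    by (cases "i < n") (auto simp: net_weights_def intro!: continuous_on_divide continuous_on_sum)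
qed

text \<open>Brouwer's theorem applied to w \<mapsto> net_weights (f (simplex_comb w)) yields a point y that
  is a convex combination of net points all within distance e of f y.\<close>

lemma schauder_approximate_fixpoint:
  fixes M :: "('a \<Rightarrow> real) set" and f :: "('a \<Rightarrow> real) \<Rightarrow> 'a \<Rightarrow> real"
  assumes "compact M" "M \<noteq> {}" "fun_convex M" "continuous_on M f" "f ` M \<subseteq> M" "e > 0"
  shows "\<exists>y\<in>M. coord_dist F (f y) y \<le> e"
proof -
  obtain n :: nat and x where n: "0 < n" and x: "\<And>i. i < n \<Longrightarrow> x i \<in> M"
    and net: "\<And>q. q \<in> M \<Longrightarrow> \<exists>i<n. coord_dist F q (x i) < e"
    using compact_coord_dist_net[OF assms(1,2,6)] by metis
  let ?L = "simplex_comb n x"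
  let ?g = "\<lambda>w. net_weights F e n x (f (?L w))"
  have L: "?L w \<in> M" if "w \<in> nsimplex n" for w
    using assms(3) n x that by (rule simplex_comb_mem)
  have fL: "f (?L w) \<in> M" if "w \<in> nsimplex n" for w
    using L[OF that] assms(5) by auto
  have "continuous_on (nsimplex n) (\<lambda>w. f (?L w))"
    by (rule continuous_on_compose2[OF assms(4) continuous_on_simplex_comb]) (use L in auto)
  then have g_cont: "continuous_on (nsimplex n) ?g"
    using fL net by (intro continuous_on_net_weights) auto
  have g_simplex: "?g \<in> nsimplex n \<rightarrow> nsimplex n"
  proof
    fix w assume "w \<in> nsimplex n"
    then show "?g w \<in> nsimplex n"
      by (rule net_weights_in_nsimplex(1)[OF net[OF fL]])
  qed
  obtain w where w: "w \<in> nsimplex n" "?g w = w"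
    by (rule brouwer_nsimplex[OF g_cont g_simplex])
  define y where "y = ?L w"
  have sum_w: "(\<Sum>i<n. w i) = 1"
    using net_weights_in_nsimplex(2)[OF net[OF fL[OF w(1)]]] w(2) by simp
  have "coord_dist F (f y) (\<lambda>k. \<Sum>i<n. w i * x i k) \<le> e"
  proof (rule coord_dist_convex_combination_le)
    show "coord_dist F (f y) (x i) \<le> e" if "i < n" "w i \<noteq> 0" for i
      using that w(2) net_weights_nonzeroD[of F e n x "f y" i] by (auto simp: y_def)
  qed (use w(1) sum_w in \<open>auto simp: nsimplex_def\<close>)
  moreover have "y = (\<lambda>k. \<Sum>i<n. w i * x i k)"
    using sum_w by (simp add: y_def simplex_comb_def)
  ultimately show ?thesis
    using L[OF w(1)] by (auto simp: y_def)
qed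

text \<open>Minimising coord_dist F (f p) p over M gives exact fixed points on each finite set F of
  coordinates; the finite intersection property then gives a fixed point.\<close>

lemma schauder_tychonoff:
  fixes M :: "('a::countable \<Rightarrow> real) set" and f :: "('a \<Rightarrow> real) \<Rightarrow> 'a \<Rightarrow> real"
  assumes "compact M" "M \<noteq> {}" "fun_convex M" "continuous_on M f" "f ` M \<subseteq> M"
  shows "\<exists>p\<in>M. f p = p"
proof -
  define C where "C k = M \<inter> (\<lambda>p. f p k - p k) -` {0}" for k
  have closed_C: "closed (C k)" for k
  proof -
    have "continuous_on M (\<lambda>p. f p k - p k)"
      by (intro continuous_on_diff continuous_on_product_then_coordinatewise[OF assms(4)] continuous_on_coordinate)
    then show ?thesis
      unfolding C_def by (rule continuous_closed_preimage) (auto intro: compact_imp_closed assms(1))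
  qed
  have finite_fix: "M \<inter> (\<Inter>k\<in>F. C k) \<noteq> {}" if "finite F" for F
  proof -
    have "continuous_on M (\<lambda>p. coord_dist F (f p) p)"
      by (intro continuous_on_coord_dist assms(4) continuous_on_id)
    then obtain p where p: "p \<in> M" and min: "\<And>q. q \<in> M \<Longrightarrow> coord_dist F (f p) p \<le> coord_dist F (f q) q"
      using continuous_attains_inf[OF assms(1,2)] by blast
    have le: "coord_dist F (f p) p \<le> 0 + e" if e: "e > 0" for e
    proof -
      obtain q where "q \<in> M" "coord_dist F (f q) q \<le> e"
        using schauder_approximate_fixpoint[OF assms e] by blast
      then show ?thesis
        using min[of q] by simp
    qed
    have "coord_dist F (f p) p \<le> 0"
      using le by (rule field_le_epsilon)
    then have "coord_dist F (f p) p = 0"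
      using coord_dist_nonneg by (rule order.antisym)
    then have "f p k = p k" if "k \<in> F" for k
      using \<open>finite F\<close> that by (simp add: coord_dist_def sum_nonneg_eq_0_iff)
    then show ?thesis
      using p by (auto simp: C_def)
  qed
  obtain p where "p \<in> M" "\<And>k. p \<in> C k"
    using compact_imp_fip_image[OF assms(1) closed_C finite_fix, of UNIV] by blast
  then show ?thesis
    by (auto simp: C_def fun_eq_iff)
qed

section \<open>Continuity of the quadratic operator on tight sets\<close>

definition tight :: "(nat \<Rightarrow> real) set \<Rightarrow> bool" where
  "tight M \<longleftrightarrow> (\<forall>\<epsilon>>0. \<exists>m. \<forall>p\<in>M. (\<Sum>\<^sub>\<infinity>k\<in>{m..}. p k) < \<epsilon>)"

lemma has_sum_product_nonneg:
  fixes p q :: "'a \<Rightarrow> real"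
  assumes "\<And>k. 0 \<le> p k" "\<And>l. 0 \<le> q l" "(p has_sum a) UNIV" "(q has_sum b) UNIV"
  shows "((\<lambda>(k, l). p k * q l) has_sum a * b) UNIV"
proof -
  have rows: "((\<lambda>l. p k * q l) has_sum p k * b) UNIV" for k
    using has_sum_cmult_right[OF assms(4)] by simp
  have "(\<lambda>k. p k * b) summable_on UNIV"
    using has_sum_cmult_left[OF assms(3), of b] by (rule has_sum_imp_summable)
  then have "(\<lambda>(k, l). p k * q l) summable_on UNIV \<times> UNIV"
    using rows assms(1,2) by (intro summable_on_SigmaI[where g = "\<lambda>k. p k * b"]) auto
  then have "((\<lambda>(k, l). p k * q l) has_sum a * b) (UNIV \<times> UNIV)"
    by (intro has_sum_SigmaI[where g = "\<lambda>k. p k * b"]) (use rows has_sum_cmult_left[OF assms(3)] in auto)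
  then show ?thesis
    by simp
qed

lemma infsum_Compl:
  fixes f :: "'a \<Rightarrow> real"
  assumes "f summable_on UNIV"
  shows "infsum f (- B) = infsum f UNIV - infsum f B"
proof -
  have "infsum f UNIV = infsum f (B \<union> - B)"
    by simp
  also have "\<dots> = infsum f B + infsum f (- B)"
    by (rule infsum_Un_disjoint) (auto intro: summable_on_subset_banach[OF assms])
  finally show ?thesis
    by simp
qed

lemma M1plus_sum_lessThan:
  assumes "p \<in> M1plus"
  shows "(\<Sum>k<m. p k) = 1 - (\<Sum>\<^sub>\<infinity>k\<in>{m..}. p k)"
proof -
  have "(p has_sum 1) UNIV"
    using assms by (simp add: M1plus_def)
  moreover have "- {..<m} = {m..}"
    by auto
  ultimately show ?thesis
    using infsum_Compl[of p "{..<m}"] by (auto simp: has_sum_iff)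
qed

lemma M1plus_iff_sums: "p \<in> M1plus \<longleftrightarrow> (\<forall>k. 0 \<le> p k) \<and> p sums 1"
  by (auto simp: M1plus_def intro: has_sum_imp_sums sums_nonneg_imp_has_sum)

context
  fixes T :: "nat \<Rightarrow> nat \<Rightarrow> nat \<Rightarrow> nat \<Rightarrow> real"
  assumes T_nonneg: "\<And>i j k l. 0 \<le> T i j k l"
    and T_sum: "\<And>k l. ((\<lambda>(i, j). T i j k l) has_sum 1) UNIV"
begin

lemma T_row_summable: "(\<lambda>j. T i j k l) summable_on UNIV"
  using summable_on_SigmaD1[of "\<lambda>i j. T i j k l" UNIV "\<lambda>_. UNIV" i] T_sum[of k l]
  by (simp add: has_sum_imp_summable)

lemma T_row_le_1: "(\<Sum>\<^sub>\<infinity>j. T i j k l) \<le> 1"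
proof (rule infsum_le_finite_sums[OF T_row_summable])
  fix J :: "nat set" assume "finite J"
  then have "(\<Sum>x\<in>{i} \<times> J. (\<lambda>(i, j). T i j k l) x) \<le> 1"
    using T_nonneg by (intro finite_sum_le_has_sum[OF T_sum]) auto
  then show "(\<Sum>j\<in>J. T i j k l) \<le> 1"
    by (simp add: sum.cartesian_product[symmetric])
qed

lemma T_row_nonneg: "0 \<le> (\<Sum>\<^sub>\<infinity>j. T i j k l)"
  by (simp add: T_nonneg infsum_nonneg)

lemma Rop_has_sum_pairs:
  assumes "p \<in> M1plus"
  shows "((\<lambda>(k, l). (\<Sum>\<^sub>\<infinity>j. T i j k l) * p k * p l) has_sum Rop T p i) UNIV"
proof -
  define a where "a k l = (\<Sum>\<^sub>\<infinity>j. T i j k l)" for k l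
  define G where "G = (\<lambda>((k::nat, l::nat), j::nat). T i j k l * p k * p l)"
  have p: "\<And>k. 0 \<le> p k" "(p has_sum 1) UNIV"
    using assms by (auto simp: M1plus_def)
  have rows: "((\<lambda>j. G (kl, j)) has_sum (case kl of (k, l) \<Rightarrow> a k l * p k * p l)) UNIV" for kl
  proof (cases kl)
    case (Pair k l)
    have "((\<lambda>j. T i j k l) has_sum a k l) UNIV"
      unfolding a_def by (rule has_sum_infsum[OF T_row_summable])
    then have "((\<lambda>j. T i j k l * (p k * p l)) has_sum a k l * (p k * p l)) UNIV"
      by (rule has_sum_cmult_left)
    then show ?thesis
      by (simp add: Pair G_def mult.assoc)
  qed
  have "(\<lambda>(k, l). a k l * p k * p l) summable_on UNIV"
  proof (rule summable_on_comparison_test)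
    show "(\<lambda>(k, l). p k * p l) summable_on UNIV"
      using has_sum_product_nonneg[OF p(1) p(1) p(2) p(2)] by (rule has_sum_imp_summable)
    show "(case x of (k, l) \<Rightarrow> a k l * p k * p l) \<le> (case x of (k, l) \<Rightarrow> p k * p l)"
      and "0 \<le> (case x of (k, l) \<Rightarrow> a k l * p k * p l)" for x
      using p(1) T_row_le_1 T_row_nonneg
      by (auto simp: a_def mult.assoc mult_left_le_one_le split: prod.split)
  qed
  then have "G summable_on UNIV \<times> UNIV"
    using rows by (intro summable_on_SigmaI) (auto simp: G_def T_nonneg p(1))
  then have G: "(G has_sum infsum G UNIV) (UNIV \<times> UNIV)"
    using has_sum_infsum by fastforce
  have "((\<lambda>(k, l). a k l * p k * p l) has_sum infsum G UNIV) UNIV"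
    using has_sum_SigmaD[OF G rows] by simp
  moreover have "((\<lambda>(j, k, l). T i j k l * p k * p l) has_sum infsum G UNIV) UNIV"
    using G by (subst (asm) has_sum_swap) (simp add: G_def case_prod_unfold)
  ultimately show ?thesis
    unfolding Rop_def a_def by (simp add: infsumI)
qed

text \<open>The neglected pairs have k \<ge> m or l \<ge> m; their total mass under p \<otimes> p is
  1 - (1 - tail)^2 \<le> 2 tail.\<close>

lemma Rop_truncation_error:
  assumes "p \<in> M1plus"
  shows "\<bar>Rop T p i - (\<Sum>(k, l)\<in>{..<m} \<times> {..<m}. (\<Sum>\<^sub>\<infinity>j. T i j k l) * p k * p l)\<bar>
    \<le> 2 * (\<Sum>\<^sub>\<infinity>k\<in>{m..}. p k)"
proof -
  define g where "g = (\<lambda>(k, l). (\<Sum>\<^sub>\<infinity>j. T i j k l) * p k * p l)"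
  define q where "q = (\<lambda>(k::nat, l::nat). p k * p l)"
  define B where "B = {..<m} \<times> {..<m}"
  have p: "\<And>k. 0 \<le> p k" "(p has_sum 1) UNIV"
    using assms by (auto simp: M1plus_def)
  have g: "(g has_sum Rop T p i) UNIV"
    unfolding g_def by (rule Rop_has_sum_pairs[OF assms])
  have q: "(q has_sum 1) UNIV"
    unfolding q_def using has_sum_product_nonneg[OF p(1) p(1) p(2) p(2)] by simp
  have g_le_q: "0 \<le> g x \<and> g x \<le> q x" for x
    using p(1) T_row_le_1 T_row_nonneg
    by (auto simp: g_def q_def mult.assoc mult_left_le_one_le split: prod.split)
  define t where "t = (\<Sum>\<^sub>\<infinity>k\<in>{m..}. p k)"
  have "sum q B = (\<Sum>k<m. p k) * (\<Sum>l<m. p l)"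
    unfolding B_def q_def sum_product sum.cartesian_product ..
  also have "\<dots> = (1 - t)\<^sup>2"
    by (simp add: M1plus_sum_lessThan[OF assms] power2_eq_square t_def)
  finally have "1 - sum q B \<le> 2 * t"
    by (simp add: power2_diff)
  moreover have "infsum g (- B) = Rop T p i - sum g B" "infsum q (- B) = 1 - sum q B"
    using infsum_Compl[OF has_sum_imp_summable[OF g], of B] infsum_Compl[OF has_sum_imp_summable[OF q], of B]
      g q by (simp_all add: B_def infsumI)
  moreover have "0 \<le> infsum g (- B)"
    using g_le_q by (simp add: infsum_nonneg)
  moreover have "infsum g (- B) \<le> infsum q (- B)"
    using g_le_q summable_on_subset_banach[OF has_sum_imp_summable[OF g]]
      summable_on_subset_banach[OF has_sum_imp_summable[OF q]]
    by (intro infsum_mono) auto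
  ultimately have "\<bar>Rop T p i - sum g B\<bar> \<le> 2 * t"
    by linarith
  then show ?thesis
    by (simp add: B_def g_def t_def)
qed

lemma continuous_on_Rop:
  assumes "M \<subseteq> M1plus" "tight M"
  shows "continuous_on M (Rop T)"
proof (rule continuous_on_coordinatewise_then_product)
  fix i
  define R where "R m p = (\<Sum>(k, l)\<in>{..<m} \<times> {..<m}. (\<Sum>\<^sub>\<infinity>j. T i j k l) * p k * p l)" for m p
  have "uniform_limit M R (\<lambda>p. Rop T p i) sequentially"
  proof (rule uniform_limitI)
    fix e :: real assume "e > 0"
    then obtain m0 where m0: "\<And>p. p \<in> M \<Longrightarrow> (\<Sum>\<^sub>\<infinity>k\<in>{m0..}. p k) < e / 2"
      using assms(2) unfolding tight_def by (meson half_gt_zero)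
    have "dist (R m p) (Rop T p i) < e" if "m \<ge> m0" "p \<in> M" for m p
    proof -
      have p: "\<And>k. 0 \<le> p k" "(p has_sum 1) UNIV"
        using assms(1) that(2) by (auto simp: M1plus_def)
      have "(\<Sum>\<^sub>\<infinity>k\<in>{m..}. p k) \<le> (\<Sum>\<^sub>\<infinity>k\<in>{m0..}. p k)"
        using that(1) p by (intro infsum_mono_neutral)
          (auto intro: summable_on_subset_banach[OF has_sum_imp_summable[OF p(2)]])
      then show ?thesis
        using Rop_truncation_error[of p i m] m0[OF that(2)] assms(1) that(2)
        by (auto simp: R_def dist_real_def abs_minus_commute)
    qed
    then show "\<forall>\<^sub>F m in sequentially. \<forall>p\<in>M. dist (R m p) (Rop T p i) < e"
      unfolding eventually_sequentially by blast
  qed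
  moreover have "continuous_on M (R m)" for m
    unfolding R_def case_prod_unfold by (intro continuous_intros)
  ultimately show "continuous_on M (\<lambda>p. Rop T p i)"
    by (intro uniform_limit_theorem[where F = sequentially and f = R]) auto
qed

end

section \<open>Compactness of tight closed sets\<close>

lemma compact_unit_cube: "compact (PiE UNIV (\<lambda>_::'a. {0..1::real}))"
proof -
  have "compactin (product_topology (\<lambda>_. euclidean) UNIV) (PiE UNIV (\<lambda>_::'a. {0..1::real}))"
    by (subst compactin_PiE) auto
  then show ?thesis
    by (simp add: euclidean_product_topology)
qed

lemma sums_1_squeeze:
  fixes p :: "nat \<Rightarrow> real"
  assumes "\<And>k. 0 \<le> p k" "\<And>n. (\<Sum>k<n. p k) \<le> 1" "\<And>j. 1 - 1 / Suc j \<le> (\<Sum>k<m j. p k)"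
  shows "p sums 1"
  unfolding sums_def
proof (rule LIMSEQ_I)
  fix r :: real assume "0 < r"
  then obtain j where j: "1 / Suc j < r"
    using nat_approx_posE by blast
  have "norm ((\<Sum>k<n. p k) - 1) < r" if "n \<ge> m j" for n
  proof -
    have "(\<Sum>k<m j. p k) \<le> (\<Sum>k<n. p k)"
      using that assms(1) by (intro sum_mono2) auto
    then show ?thesis
      using assms(2)[of n] assms(3)[of j] j by auto
  qed
  then show "\<exists>n0. \<forall>n\<ge>n0. norm ((\<Sum>k<n. p k) - 1) < r"
    by blast
qed

lemma nonneg_partial_sums_le_1_in_unit_cube:
  fixes p :: "nat \<Rightarrow> real"
  assumes "\<And>k. 0 \<le> p k" "\<And>n. (\<Sum>k<n. p k) \<le> 1"
  shows "p \<in> PiE UNIV (\<lambda>_. {0..1})"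
proof -
  have "p k \<le> 1" for k
    using assms(2)[of "Suc k"] sum_nonneg[of "{..<k}" p] assms(1) by simp
  then show ?thesis
    using assms(1) by auto
qed

lemma compact_if_tight_closedin:
  assumes "M \<subseteq> M1plus" "closedin (top_of_set M1plus) M" "tight M"
  shows "compact M"
proof -
  have "\<forall>j. \<exists>n. \<forall>p\<in>M. (\<Sum>\<^sub>\<infinity>k\<in>{n..}. p k) < 1 / Suc j"
    using assms(3) by (simp add: tight_def)
  then obtain m :: "nat \<Rightarrow> nat" where m: "\<And>j p. p \<in> M \<Longrightarrow> (\<Sum>\<^sub>\<infinity>k\<in>{m j..}. p k) < 1 / Suc j"
    by metis
  define Z where "Z = {p. (\<forall>k. 0 \<le> p k) \<and> (\<forall>n. (\<Sum>k<n. p k) \<le> 1) \<and> (\<forall>j. 1 - 1 / Suc j \<le> (\<Sum>k<m j. p k))}"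
  have "closed Z"
    unfolding Z_def by (intro closed_Collect_conj closed_Collect_all closed_Collect_le continuous_intros)
  moreover have "Z \<subseteq> PiE UNIV (\<lambda>_. {0..1})"
    using nonneg_partial_sums_le_1_in_unit_cube by (auto simp: Z_def)
  ultimately have "compact Z"
    using compact_Int_closed[OF compact_unit_cube] by (metis inf.absorb_iff2)
  have "Z \<subseteq> M1plus"
  proof
    fix p assume "p \<in> Z"
    then show "p \<in> M1plus"
      using sums_1_squeeze[of p m] by (simp add: Z_def M1plus_iff_sums)
  qed
  moreover have "M \<subseteq> Z"
  proof
    fix p assume p: "p \<in> M"
    then have "p \<in> M1plus"
      using assms(1) by blast
    moreover have "0 \<le> (\<Sum>\<^sub>\<infinity>k\<in>{n..}. p k)" for n
      using p assms(1) by (auto simp: M1plus_def intro: infsum_nonneg)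
    ultimately show "p \<in> Z"
      using m[OF p] by (auto simp: Z_def M1plus_def M1plus_sum_lessThan less_imp_le)
  qed
  moreover obtain C where "closed C" "M = M1plus \<inter> C"
    using assms(2) closedin_closed by blast
  ultimately have "M = Z \<inter> C"
    by blast
  then show ?thesis
    using compact_Int_closed[OF \<open>compact Z\<close> \<open>closed C\<close>] by simp
qed

theorem proposition3:
  fixes T :: "nat \<Rightarrow> nat \<Rightarrow> nat \<Rightarrow> nat \<Rightarrow> real"
    and M :: "(nat \<Rightarrow> real) set"
  assumes T_nonneg: "\<And>i j k l. 0 \<le> T i j k l"
    and T_sum: "\<And>k l. ((\<lambda>(i,j). T i j k l) has_sum 1) UNIV"
    and M_sub: "M \<subseteq> M1plus"
    and M_ne: "M \<noteq> {}"
    and M_convex: "\<And>p q t. p \<in> M \<Longrightarrow> q \<in> M \<Longrightarrow> 0 \<le> t \<Longrightarrow> t \<le> 1 \<Longrightarrow> (\<lambda>k. t * p k + (1 - t) * q k) \<in> M"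
    and M_closed: "closedin (top_of_set M1plus) M"
    and M_inv: "Rop T ` M \<subseteq> M"
    and M_tight: "\<And>\<epsilon>. \<epsilon> > 0 \<Longrightarrow> \<exists>m. \<forall>p\<in>M. (\<Sum>\<^sub>\<infinity>k\<in>{m..}. p k) < \<epsilon>"
  shows "\<exists>p\<in>M. Rop T p = p"
proof -
  have tight: "tight M"
    using M_tight by (simp add: tight_def)
  have "compact M"
    by (rule compact_if_tight_closedin[OF M_sub M_closed tight])
  moreover have "fun_convex M"
    using M_convex by (simp add: fun_convex_def)
  moreover have "continuous_on M (Rop T)"
    by (rule continuous_on_Rop[OF T_nonneg T_sum M_sub tight])
  ultimately show ?thesis
    using schauder_tychonoff M_ne M_inv by blast
qed

end
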